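(* Let $H=(V,E)$ be an unweighted hypergraph and consider the algorithm Estimation$(H)$: compute a number $k>0$ with $\gamma_H(e)\ge k$ for all $e\in E$; set $H_0=H$ and $i=1$; while $H_{i-1}$ has edges, let $F_i=\textsc{WeakEdges}(H_{i-1},2^ik)$, set $\gamma'(e)=2^{i-1}k$ for every $e\in F_i$, set $H_i=H_{i-1}-F_i$ and increase $i$ by one. Here $\textsc{WeakEdges}(G,t)$ is any procedure returning a set of edges of $G$ that contains all $t$-weak edges of $G$. Then: (1) for each $i$ and each $e\in F_i$, $\gamma_H(e)\ge 2^{i-1}k$; (2) for each $e\in E$ assigned a value $\gamma'(e)$ by the algorithm, $\gamma'(e)\le\gamma_H(e)$.
   Context: A hypergraph $H=(V,E)$ has edges that are subsets of $V$. For $U\subseteq V$, $H[U]=(U,\{e\in E:e\subseteq U\})$; for $A\subseteq V$, $\delta_H(A)$ is the set of edges meeting both $A$ and $V\setminus A$; $\lambda(H)=\min_{\emptyset\subsetneq A\subsetneq V}|\delta_H(A)|$. The strength of $e$ is $\gamma_H(e)=\max_{e\subseteq U\subseteq V}\lambda(H[U])$. An edge is $t$-weak in $G$ if its strength in $G$ is less than $t$. $H-F$ denotes deletion of the edge set $F$. *)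

theory Defs
  imports "HOL-Library.Extended_Real"
begin

text \<open>A hypergraph is given by a vertex set V, a set E of edge identifiers
  (allowing parallel edges) and a map ends assigning to each edge its vertex set.\<close>

definition induced_edges :: "'e set \<Rightarrow> ('e \<Rightarrow> 'a set) \<Rightarrow> 'a set \<Rightarrow> 'e set" where
  "induced_edges E ends U = {f \<in> E. ends f \<subseteq> U}"

definition cut_edges :: "'a set \<Rightarrow> 'e set \<Rightarrow> ('e \<Rightarrow> 'a set) \<Rightarrow> 'a set \<Rightarrow> 'e set" where
  "cut_edges V E ends A = {f \<in> E. ends f \<inter> A \<noteq> {} \<and> ends f \<inter> (V - A) \<noteq> {}}"

text \<open>Edge connectivity lambda(H); the minimum over an empty family is infinity.\<close>
definition edge_conn :: "'a set \<Rightarrow> 'e set \<Rightarrow> ('e \<Rightarrow> 'a set) \<Rightarrow> ereal" where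
  "edge_conn V E ends =
     Inf {ereal (real (card (cut_edges V E ends A))) | A. A \<noteq> {} \<and> A \<subset> V}"

definition strength :: "'a set \<Rightarrow> 'e set \<Rightarrow> ('e \<Rightarrow> 'a set) \<Rightarrow> 'e \<Rightarrow> ereal" where
  "strength V E ends e =
     Sup {edge_conn U (induced_edges E ends U) ends | U. ends e \<subseteq> U \<and> U \<subseteq> V}"

definition weak :: "'a set \<Rightarrow> 'e set \<Rightarrow> ('e \<Rightarrow> 'a set) \<Rightarrow> real \<Rightarrow> 'e \<Rightarrow> bool" where
  "weak V E ends t e \<longleftrightarrow> strength V E ends e < ereal t"

text \<open>Edges remaining after i rounds of the algorithm: E(H_i) = E - (F_1 \<union> ... \<union> F_i).\<close>
definition remaining :: "'e set \<Rightarrow> (nat \<Rightarrow> 'e set) \<Rightarrow> nat \<Rightarrow> 'e set" where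
  "remaining E F i = E - (\<Union>j\<in>{1..i}. F j)"

text \<open>F is a valid run of Estimation(H) with parameter k: whenever round i is executed
  (H_{i-1} still has edges), F_i is a set of edges of H_{i-1} containing all
  (2^i k)-weak edges of H_{i-1}.\<close>
definition estimation_run ::
  "'a set \<Rightarrow> 'e set \<Rightarrow> ('e \<Rightarrow> 'a set) \<Rightarrow> real \<Rightarrow> (nat \<Rightarrow> 'e set) \<Rightarrow> bool" where
  "estimation_run V E ends k F \<longleftrightarrow>
     (\<forall>i\<ge>1. remaining E F (i - 1) \<noteq> {} \<longrightarrow>
        F i \<subseteq> remaining E F (i - 1) \<and>
        {e \<in> remaining E F (i - 1). weak V (remaining E F (i - 1)) ends (2 ^ i * k) e} \<subseteq> F i)"

definition executed :: "'e set \<Rightarrow> (nat \<Rightarrow> 'e set) \<Rightarrow> nat \<Rightarrow> bool" where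
  "executed E F i \<longleftrightarrow> i \<ge> 1 \<and> remaining E F (i - 1) \<noteq> {}"

definition est_value :: "'e set \<Rightarrow> (nat \<Rightarrow> 'e set) \<Rightarrow> real \<Rightarrow> 'e \<Rightarrow> real option" where
  "est_value E F k e =
     (if \<exists>i. executed E F i \<and> e \<in> F i
      then Some (2 ^ ((THE i. executed E F i \<and> e \<in> F i) - 1) * k) else None)"

end

theory Submission
  imports Defs
begin

text \<open>Deleting edges can only shrink cuts, hence connectivities of induced
  subhypergraphs, hence strengths. An edge of F_i with i \<ge> 2 survived round i-1,
  so it was not (2^(i-1) k)-weak in H_(i-2); its strength there, and a fortiori in H,
  is at least 2^(i-1) k. For i = 1 this is the assumption on k. An edge lies in at
  most one F_i, so the value gamma' assigned to it is exactly 2^(i-1) k.\<close>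

lemma cut_edges_card_mono:
  assumes "finite E" "E' \<subseteq> E"
  shows "card (cut_edges V E' ends A) \<le> card (cut_edges V E ends A)"
  using assms by (intro card_mono) (auto simp: cut_edges_def)

lemma edge_conn_mono:
  assumes "finite E" "E' \<subseteq> E"
  shows "edge_conn V E' ends \<le> edge_conn V E ends"
  unfolding edge_conn_def
proof (rule Inf_mono)
  fix b
  assume "b \<in> {ereal (real (card (cut_edges V E ends A))) | A. A \<noteq> {} \<and> A \<subset> V}"
  then obtain A where "A \<noteq> {}" "A \<subset> V" "b = ereal (real (card (cut_edges V E ends A)))"
    by blast
  then show "\<exists>a\<in>{ereal (real (card (cut_edges V E' ends A))) | A. A \<noteq> {} \<and> A \<subset> V}. a \<le> b"
    using cut_edges_card_mono[OF assms, of V ends A]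
    by (intro bexI[of _ "ereal (real (card (cut_edges V E' ends A)))"]) auto
qed

lemma strength_mono:
  assumes "finite E" "E' \<subseteq> E"
  shows "strength V E' ends e \<le> strength V E ends e"
  unfolding strength_def
proof (rule Sup_mono)
  fix a
  assume "a \<in> {edge_conn U (induced_edges E' ends U) ends | U. ends e \<subseteq> U \<and> U \<subseteq> V}"
  then obtain U where "ends e \<subseteq> U" "U \<subseteq> V" "a = edge_conn U (induced_edges E' ends U) ends"
    by blast
  moreover have "edge_conn U (induced_edges E' ends U) ends \<le> edge_conn U (induced_edges E ends U) ends"
    using assms by (intro edge_conn_mono) (auto simp: induced_edges_def)
  ultimately show "\<exists>b\<in>{edge_conn U (induced_edges E ends U) ends | U. ends e \<subseteq> U \<and> U \<subseteq> V}. a \<le> b"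
    by blast
qed

lemma remaining_subset: "remaining E F i \<subseteq> E"
  by (auto simp: remaining_def)

lemma remaining_Suc: "remaining E F (Suc i) = remaining E F i - F (Suc i)"
  by (auto simp: remaining_def atLeastAtMostSuc_conv)

lemma estimation_run_round_subset:
  assumes "estimation_run V E ends k F" "executed E F i"
  shows "F i \<subseteq> remaining E F (i - 1)"
  using assms by (auto simp: estimation_run_def executed_def)

lemma estimation_run_survivor_strength:
  assumes run: "estimation_run V E ends k F" and "i \<ge> 1"
    and e: "e \<in> remaining E F (i - 1)" "e \<notin> F i"
  shows "ereal (2 ^ i * k) \<le> strength V (remaining E F (i - 1)) ends e"
proof -
  have "remaining E F (i - 1) \<noteq> {}"
    using e by blast
  then have "\<not> weak V (remaining E F (i - 1)) ends (2 ^ i * k) e"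
    using run \<open>i \<ge> 1\<close> e unfolding estimation_run_def by blast
  then show ?thesis
    by (simp add: weak_def not_less)
qed

lemma estimation_run_round_unique:
  assumes run: "estimation_run V E ends k F"
    and "executed E F i" "e \<in> F i" "executed E F j" "e \<in> F j" "i < j"
  shows False
proof -
  have "e \<in> remaining E F (j - 1)"
    using estimation_run_round_subset[OF run] assms by blast
  moreover have "i \<in> {1..j - 1}"
    using assms by (auto simp: executed_def)
  ultimately show False
    using \<open>e \<in> F i\<close> by (auto simp: remaining_def)
qed

lemma estimation_run_strength:
  assumes "finite E" "\<forall>e\<in>E. strength V E ends e \<ge> ereal k"
    and run: "estimation_run V E ends k F"
    and i: "executed E F i" and e: "e \<in> F i"
  shows "ereal (2 ^ (i - 1) * k) \<le> strength V E ends e"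
proof (cases "i = 1")
  case True
  then have "e \<in> E"
    using estimation_run_round_subset[OF run i] e remaining_subset[of E F "i - 1"] by blast
  with True show ?thesis
    using assms(2) by simp
next
  case False
  then obtain j where j: "i = Suc j" "j \<ge> 1"
    using i by (cases i) (auto simp: executed_def)
  have "e \<in> remaining E F j"
    using estimation_run_round_subset[OF run i] e j(1) by auto
  moreover have "remaining E F j = remaining E F (j - 1) - F j"
    using remaining_Suc[of E F "j - 1"] j(2) by simp
  ultimately have survived: "e \<in> remaining E F (j - 1)" "e \<notin> F j"
    by auto
  have "ereal (2 ^ j * k) \<le> strength V (remaining E F (j - 1)) ends e"
    using estimation_run_survivor_strength[OF run \<open>j \<ge> 1\<close> survived] .
  also have "\<dots> \<le> strength V E ends e"
    using \<open>finite E\<close> remaining_subset by (rule strength_mono)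
  finally show ?thesis
    using j by simp
qed

lemma est_value_SomeE:
  assumes run: "estimation_run V E ends k F" and "est_value E F k e = Some g"
  obtains i where "executed E F i" "e \<in> F i" "g = 2 ^ (i - 1) * k"
proof -
  obtain i where i: "executed E F i" "e \<in> F i"
    using assms(2) by (auto simp: est_value_def split: if_splits)
  have "(THE i. executed E F i \<and> e \<in> F i) = i"
  proof (rule the_equality)
    show "j = i" if "executed E F j \<and> e \<in> F j" for j
      using that i estimation_run_round_unique[OF run] by (metis linorder_neqE_nat)
  qed (use i in blast)
  then show ?thesis
    using that i assms(2) by (auto simp: est_value_def split: if_splits)
qed

theorem lemma3p1:
  fixes V :: "'a set" and E :: "'e set" and ends :: "'e \<Rightarrow> 'a set"
    and k :: real and F :: "nat \<Rightarrow> 'e set"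
  assumes "finite V" and "finite E" and "\<forall>e\<in>E. ends e \<subseteq> V"
    and "k > 0" and "\<forall>e\<in>E. strength V E ends e \<ge> ereal k"
    and "estimation_run V E ends k F"
  shows "(\<forall>i e. executed E F i \<and> e \<in> F i \<longrightarrow> strength V E ends e \<ge> ereal (2 ^ (i - 1) * k))
       \<and> (\<forall>e g. e \<in> E \<and> est_value E F k e = Some g \<longrightarrow> ereal g \<le> strength V E ends e)"
proof (intro conjI allI impI; elim conjE)
  show "ereal (2 ^ (i - 1) * k) \<le> strength V E ends e" if "executed E F i" "e \<in> F i" for i e
    using estimation_run_strength[OF assms(2,5,6) that] .
next
  fix e g
  assume "est_value E F k e = Some g"
  with assms(6) obtain i where "executed E F i" "e \<in> F i" "g = 2 ^ (i - 1) * k"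
    by (rule est_value_SomeE)
  then show "ereal g \<le> strength V E ends e"
    using estimation_run_strength[OF assms(2,5,6)] by simp
qed

end
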